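(* Let $(D,D_{t'})$ be a proper pair (in the sense allowing contemporaneous effects) and let $A,C\subseteq V\cup W$ and $B\subseteq V$ be pairwise disjoint. Assume there are no tailed directed edges into $B$ in $D$. If $B$ is $\delta$-separated from $A$ given $C$ in $D$, then for every $0<t\le t'$, $\nu_t^B$ is $d$-separated from $\bar\nu_{t-1}^A$ given $\bar\nu_{t-1}^{B\cup C}$ in $D_{t'}$.
   Context: $V$, $W$ are finite disjoint sets ($W$ = baseline nodes). Tailed directed graph: graph on $V\cup W$ with directed edges $i\to j$ and tailed directed edges $i\bullet\!\!\to j$; $i\ast\!\!\to j$ means either. Only baseline nodes have edges into baseline nodes, and these are tailed. $D^-$ is the DG with $i\to j$ iff $i\ast\!\!\to j$ in $D$. DG terminology: path = walk without repeated nodes; collider = non-endpoint node with both adjacent edges pointing into it; $\mathrm{an}(C)$ = nodes with a directed path into $C$. $\delta$-separation in a DG $G$: with $G^B$ obtained by deleting all edges $i\to j$ with $i\in B$, $B$ is $\delta$-separated from $A$ given $C$ if every path in $G^B$ between $A$ and $B$ contains a noncollider in $C$ or a collider not in $\mathrm{an}_G(C)\cup C$; in a tailed directed graph $D$ this is applied to $D^-$. $d$-separation in a DAG: same blocking condition on paths of the DAG with no edge deletion. Unrolling: the unrolled version of $D$ on $t'$ lags is the DAG $D_{t'}$ on nodes $\bigcup_{i\in V}\{\nu_0^i,\dots,\nu_{t'}^i\}\cup\{\nu_0^i:i\in W\}$ with $\nu_s^i\to\nu_t^j$ if $s<t$ and $i\ast\!\!\to j$, and $\nu_t^i\to\nu_t^j$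 if $i\bullet\!\!\to j$. Rolling: the rolled version of a DAG $D_{t'}$ on such a node set has $i\ast\!\!\to j$ if $\nu_s^i\to\nu_t^j$ for some $s\le t$, and $i\bullet\!\!\to j$ iff $\nu_t^i\to\nu_t^j$ for some $t$. Standing assumption: if $\nu_t^i\to\nu_t^j$ is present then so is $\nu_s^i\to\nu_u^j$ for some $s<u$. $(D,D_{t'})$ is proper if $D$ is the rolled version of $D_{t'}$ or $D_{t'}$ is the unrolled version of $D$. $\nu_t^A=\{\nu_t^i:i\in A\}$, $\bar\nu_t^A=\{\nu_s^i:i\in A,s\le t\}$. *)

theory Defs
  imports Main
begin

text \<open>A tailed directed graph on V \<union> W (W = baseline nodes) is given by two edge
relations: Ed i j means i \<rightarrow> j, Et i j means the tailed edge i \<bullet>\<rightarrow> j.\<close>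

definition tailed_dg :: "'a set \<Rightarrow> 'a set \<Rightarrow> ('a \<Rightarrow> 'a \<Rightarrow> bool) \<Rightarrow> ('a \<Rightarrow> 'a \<Rightarrow> bool) \<Rightarrow> bool" where
  "tailed_dg V W Ed Et \<longleftrightarrow>
     finite V \<and> finite W \<and> V \<inter> W = {} \<and>
     (\<forall>i j. (Ed i j \<or> Et i j) \<longrightarrow> i \<in> V \<union> W \<and> j \<in> V \<union> W) \<and>
     (\<forall>i j. \<not> (Ed i j \<and> Et i j)) \<and>
     (\<forall>i j. j \<in> W \<and> (Ed i j \<or> Et i j) \<longrightarrow> i \<in> W \<and> Et i j)"

definition minus_graph :: "('a \<Rightarrow> 'a \<Rightarrow> bool) \<Rightarrow> ('a \<Rightarrow> 'a \<Rightarrow> bool) \<Rightarrow> 'a \<Rightarrow> 'a \<Rightarrow> bool" where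
  "minus_graph Ed Et = (\<lambda>i j. Ed i j \<or> Et i j)"

text \<open>A path is given by its node list xs (pairwise distinct) and the orientations ds
of its edges: ds!k = True means the k-th edge is xs!k \<rightarrow> xs!(k+1), False means
xs!(k+1) \<rightarrow> xs!k.\<close>

definition is_path :: "('b \<Rightarrow> 'b \<Rightarrow> bool) \<Rightarrow> 'b list \<Rightarrow> bool list \<Rightarrow> bool" where
  "is_path E xs ds \<longleftrightarrow> xs \<noteq> [] \<and> length ds = length xs - 1 \<and> distinct xs \<and>
     (\<forall>k < length ds. if ds ! k then E (xs ! k) (xs ! Suc k) else E (xs ! Suc k) (xs ! k))"

text \<open>Non-endpoint node xs!k (0 < k < length xs - 1) is a collider iff both adjacent
edges point into it.\<close>
definition is_collider :: "bool list \<Rightarrow> nat \<Rightarrow> bool" where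
  "is_collider ds k \<longleftrightarrow> ds ! (k - 1) \<and> \<not> ds ! k"

definition ancestors :: "('b \<Rightarrow> 'b \<Rightarrow> bool) \<Rightarrow> 'b set \<Rightarrow> 'b set" where
  "ancestors E C = {x. \<exists>y\<in>C. (x, y) \<in> {(u, v). E u v}\<^sup>*}"

definition blocked :: "('b \<Rightarrow> 'b \<Rightarrow> bool) \<Rightarrow> 'b set \<Rightarrow> 'b list \<Rightarrow> bool list \<Rightarrow> bool" where
  "blocked Ean C xs ds \<longleftrightarrow>
     (\<exists>k. 0 < k \<and> k < length xs - 1 \<and>
        ((\<not> is_collider ds k \<and> xs ! k \<in> C) \<or>
         (is_collider ds k \<and> xs ! k \<notin> ancestors Ean C \<union> C)))"

definition sep_paths :: "('b \<Rightarrow> 'b \<Rightarrow> bool) \<Rightarrow> ('b \<Rightarrow> 'b \<Rightarrow> bool) \<Rightarrow> 'b set \<Rightarrow> 'b set \<Rightarrow> 'b set \<Rightarrow> bool" where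
  "sep_paths E Ean A B C \<longleftrightarrow>
     (\<forall>xs ds. is_path E xs ds \<and> hd xs \<in> A \<and> last xs \<in> B \<longrightarrow> blocked Ean C xs ds)"

definition delta_sep_dg :: "('b \<Rightarrow> 'b \<Rightarrow> bool) \<Rightarrow> 'b set \<Rightarrow> 'b set \<Rightarrow> 'b set \<Rightarrow> bool" where
  "delta_sep_dg G A B C = sep_paths (\<lambda>i j. G i j \<and> i \<notin> B) G A B C"

definition delta_sep :: "('a \<Rightarrow> 'a \<Rightarrow> bool) \<Rightarrow> ('a \<Rightarrow> 'a \<Rightarrow> bool) \<Rightarrow> 'a set \<Rightarrow> 'a set \<Rightarrow> 'a set \<Rightarrow> bool" where
  "delta_sep Ed Et A B C = delta_sep_dg (minus_graph Ed Et) A B C"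

definition d_sep :: "('b \<Rightarrow> 'b \<Rightarrow> bool) \<Rightarrow> 'b set \<Rightarrow> 'b set \<Rightarrow> 'b set \<Rightarrow> bool" where
  "d_sep G A B C = sep_paths G G A B C"

text \<open>Node nu_t^i is represented as the pair (i, t).\<close>
definition unr_nodes :: "'a set \<Rightarrow> 'a set \<Rightarrow> nat \<Rightarrow> ('a \<times> nat) set" where
  "unr_nodes V W t' = {(i, t). i \<in> V \<and> t \<le> t'} \<union> {(i, t). i \<in> W \<and> t = 0}"

definition dag_on :: "('b set) \<Rightarrow> ('b \<Rightarrow> 'b \<Rightarrow> bool) \<Rightarrow> bool" where
  "dag_on N G \<longleftrightarrow> (\<forall>x y. G x y \<longrightarrow> x \<in> N \<and> y \<in> N) \<and>
     (\<forall>x. (x, x) \<notin> {(u, v). G u v}\<^sup>+)"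

definition unrolled :: "'a set \<Rightarrow> 'a set \<Rightarrow> nat \<Rightarrow> ('a \<Rightarrow> 'a \<Rightarrow> bool) \<Rightarrow> ('a \<Rightarrow> 'a \<Rightarrow> bool)
    \<Rightarrow> ('a \<times> nat) \<Rightarrow> ('a \<times> nat) \<Rightarrow> bool" where
  "unrolled V W t' Ed Et = (\<lambda>(i, s) (j, t).
     (i, s) \<in> unr_nodes V W t' \<and> (j, t) \<in> unr_nodes V W t' \<and>
     ((s < t \<and> (Ed i j \<or> Et i j)) \<or> (s = t \<and> Et i j)))"

text \<open>D is the rolled version of the DAG G (on the unrolled node set), where G is
time-respecting and satisfies the standing assumption.\<close>
definition is_rolled :: "'a set \<Rightarrow> 'a set \<Rightarrow> nat \<Rightarrow> (('a \<times> nat) \<Rightarrow> ('a \<times> nat) \<Rightarrow> bool)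
    \<Rightarrow> ('a \<Rightarrow> 'a \<Rightarrow> bool) \<Rightarrow> ('a \<Rightarrow> 'a \<Rightarrow> bool) \<Rightarrow> bool" where
  "is_rolled V W t' G Ed Et \<longleftrightarrow>
     (\<forall>i j s t. G (i, s) (j, t) \<longrightarrow> s \<le> t) \<and>
     (\<forall>i j t. G (i, t) (j, t) \<and> j \<in> V \<longrightarrow> (\<exists>s u. s < u \<and> G (i, s) (j, u))) \<and>
     (\<forall>i j. Et i j \<longleftrightarrow> (\<exists>t. G (i, t) (j, t))) \<and>
     (\<forall>i j. (Ed i j \<or> Et i j) \<longleftrightarrow> (\<exists>s t. s \<le> t \<and> G (i, s) (j, t)))"

definition proper_pair :: "'a set \<Rightarrow> 'a set \<Rightarrow> ('a \<Rightarrow> 'a \<Rightarrow> bool) \<Rightarrow> ('a \<Rightarrow> 'a \<Rightarrow> bool) \<Rightarrow> nat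
    \<Rightarrow> (('a \<times> nat) \<Rightarrow> ('a \<times> nat) \<Rightarrow> bool) \<Rightarrow> bool" where
  "proper_pair V W Ed Et t' G \<longleftrightarrow>
     tailed_dg V W Ed Et \<and> dag_on (unr_nodes V W t') G \<and>
     (is_rolled V W t' G Ed Et \<or> G = unrolled V W t' Ed Et)"

definition nu :: "'a set \<Rightarrow> 'a set \<Rightarrow> nat \<Rightarrow> 'a set \<Rightarrow> nat \<Rightarrow> ('a \<times> nat) set" where
  "nu V W t' A t = {(i, s). i \<in> A \<and> s = t \<and> (i, s) \<in> unr_nodes V W t'}"

definition nu_bar :: "'a set \<Rightarrow> 'a set \<Rightarrow> nat \<Rightarrow> 'a set \<Rightarrow> nat \<Rightarrow> ('a \<times> nat) set" where
  "nu_bar V W t' A t = {(i, s). i \<in> A \<and> s \<le> t \<and> (i, s) \<in> unr_nodes V W t'}"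

end

theory Submission
  imports Defs
begin

text \<open>Suppose some path of the unrolled graph from before time t into a node of B at time t
were d-connecting given the past of B and C. Edges of the unrolled graph never go back in time,
and a node of B at time t has no parent at time t, so the path stays strictly before t until its
last node, which it enters along a forward edge; thus its non-colliders project to nodes outside
B and C, and its colliders, being ancestors of the conditioning set, project to ancestors of
B or C in the rolled graph. Projecting the path to the rolled graph gives a walk from A into B
that uses no edge out of B and is connecting given C, except that colliders may be ancestors
of B only. Such a collider can be removed by cutting the walk there and continuing along a
directed path into B, and finally loops are cut out of the walk, leaving a path that contradicts
the delta-separation of B from A given C.\<close>

definition is_walk :: "('b \<Rightarrow> 'b \<Rightarrow> bool) \<Rightarrow> 'b list \<Rightarrow> bool list \<Rightarrow> bool" where
  "is_walk E xs ds \<longleftrightarrow> xs \<noteq> [] \<and> length ds = length xs - 1 \<and>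
     (\<forall>k < length ds. if ds ! k then E (xs ! k) (xs ! Suc k) else E (xs ! Suc k) (xs ! k))"

text \<open>Colliders lie in K and non-colliders outside C; for K = ancestors H C this says that the
walk is not blocked given C. The rerouting step below changes K while keeping C.\<close>

definition active_walk :: "'b set \<Rightarrow> 'b set \<Rightarrow> 'b list \<Rightarrow> bool list \<Rightarrow> bool" where
  "active_walk K C xs ds \<longleftrightarrow> (\<forall>k. 0 < k \<and> k < length xs - 1 \<longrightarrow>
      (is_collider ds k \<longrightarrow> xs ! k \<in> K) \<and> (\<not> is_collider ds k \<longrightarrow> xs ! k \<notin> C))"

lemma is_path_iff_walk_distinct: "is_path E xs ds \<longleftrightarrow> is_walk E xs ds \<and> distinct xs"
  unfolding is_path_def is_walk_def by auto

lemma is_walk_edge: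
  "is_walk E xs ds \<Longrightarrow> k < length ds \<Longrightarrow>
     (if ds ! k then E (xs ! k) (xs ! Suc k) else E (xs ! Suc k) (xs ! k))"
  unfolding is_walk_def by blast

lemma subset_ancestors: "C \<subseteq> ancestors H C"
  unfolding ancestors_def by auto

lemma ancestors_Un: "ancestors H (B \<union> C) = ancestors H B \<union> ancestors H C"
  unfolding ancestors_def by blast

definition ancestral :: "('b \<Rightarrow> 'b \<Rightarrow> bool) \<Rightarrow> 'b set \<Rightarrow> bool" where
  "ancestral E K \<longleftrightarrow> (\<forall>u v. E u v \<and> v \<in> K \<longrightarrow> u \<in> K)"

lemma ancestral_ancestors: "ancestral H (ancestors H C)"
  unfolding ancestral_def ancestors_def by (blast intro: converse_rtrancl_into_rtrancl)

lemma ancestral_mono: "(\<And>u v. E u v \<Longrightarrow> H u v) \<Longrightarrow> ancestral H K \<Longrightarrow> ancestral E K"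
  unfolding ancestral_def by blast

lemma ancestral_rtrancl:
  assumes "ancestral E K" and "(x, y) \<in> {(u, v). E u v}\<^sup>*" and "y \<in> K"
  shows "x \<in> K"
  using assms(2,3)
  by (induction rule: converse_rtrancl_induct) (use assms(1) in \<open>auto simp: ancestral_def\<close>)

lemma not_blocked_iff_active_walk:
  "\<not> blocked H C xs ds \<longleftrightarrow> active_walk (ancestors H C) C xs ds"
  using subset_ancestors[of C H] unfolding blocked_def active_walk_def by blast

lemma rtrancl_map_edges:
  assumes "\<And>x y. G x y \<Longrightarrow> H (f x) (f y)" and "(x, y) \<in> {(u, v). G u v}\<^sup>*"
  shows "(f x, f y) \<in> {(u, v). H u v}\<^sup>*"
  using assms(2) by induction (auto intro: rtrancl_into_rtrancl assms(1))

lemma rtrancl_monotone: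
  fixes \<tau> :: "'b \<Rightarrow> 'c::preorder"
  assumes "\<And>x y. G x y \<Longrightarrow> \<tau> x \<le> \<tau> y" and "(x, y) \<in> {(u, v). G u v}\<^sup>*"
  shows "\<tau> x \<le> \<tau> y"
  using assms(2) by induction (auto dest: assms(1) intro: order_trans)

lemma ancestors_map:
  assumes "\<And>x y. G x y \<Longrightarrow> H (f x) (f y)" "f ` S \<subseteq> T" "x \<in> ancestors G S"
  shows "f x \<in> ancestors H T"
proof -
  obtain y where "y \<in> S" and path: "(x, y) \<in> {(u, v). G u v}\<^sup>*"
    using assms(3) unfolding ancestors_def by blast
  then show ?thesis
    using rtrancl_map_edges[of G H f, OF assms(1) path] assms(2) unfolding ancestors_def by blast
qed

lemma ancestors_bounded:
  fixes \<tau> :: "'b \<Rightarrow> 'c::preorder"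
  assumes "\<And>x y. G x y \<Longrightarrow> \<tau> x \<le> \<tau> y" "\<forall>y\<in>S. \<tau> y \<le> c" "x \<in> ancestors G S"
  shows "\<tau> x \<le> c"
proof -
  obtain y where "y \<in> S" and path: "(x, y) \<in> {(u, v). G u v}\<^sup>*"
    using assms(3) unfolding ancestors_def by blast
  from rtrancl_monotone[of G \<tau>, OF assms(1) path] show ?thesis
    using assms(2) \<open>y \<in> S\<close> by (blast intro: order_trans)
qed

lemma exists_first_backward_edge:
  assumes "k \<le> length ds"
  shows "\<exists>m. k \<le> m \<and> m \<le> length ds \<and> (\<forall>l. k \<le> l \<and> l < m \<longrightarrow> ds ! l) \<and>
    (m < length ds \<longrightarrow> \<not> ds ! m)"
proof -
  let ?P = "\<lambda>m. k \<le> m \<and> (m = length ds \<or> \<not> ds ! m)"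
  have "?P (LEAST m. ?P m)" by (rule LeastI[of ?P "length ds"]) (use assms in simp)
  moreover have "(LEAST m. ?P m) \<le> length ds" by (rule Least_le) (use assms in simp)
  moreover have "ds ! l" if "k \<le> l" "l < (LEAST m. ?P m)" for l
    using not_less_Least[OF that(2)] that(1) assms by auto
  ultimately show ?thesis by (intro exI[of _ "LEAST m. ?P m"]) auto
qed

lemma walk_forward_rtrancl:
  assumes "is_walk E xs ds" "k \<le> m" "m \<le> length ds" "\<forall>l. k \<le> l \<and> l < m \<longrightarrow> ds ! l"
  shows "(xs ! k, xs ! m) \<in> {(u, v). E u v}\<^sup>*"
  using assms(2-4)
proof (induction m)
  case 0 then show ?case by simp
next
  case (Suc m)
  show ?case
  proof (cases "k = Suc m")
    case False
    then have "(xs ! k, xs ! m) \<in> {(u, v). E u v}\<^sup>*" using Suc by simp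
    moreover have "E (xs ! m) (xs ! Suc m)" using is_walk_edge[OF assms(1), of m] Suc.prems False by simp
    ultimately show ?thesis by (simp add: rtrancl_into_rtrancl)
  qed simp
qed

text \<open>If a walk leaves a node along a forward edge and later enters some node along a
backward edge, a collider lies in between and is reached from that node by a directed path.\<close>

lemma active_walk_turn_in_ancestral:
  assumes walk: "is_walk E xs ds" and act: "active_walk K C xs ds"
    and closed: "ancestral E K"
    and "i < j" "j \<le> length ds" "ds ! i" "\<not> ds ! (j - 1)"
  shows "xs ! i \<in> K"
proof -
  have i_le: "i \<le> length ds" using assms(4,5) by simp
  obtain m where m: "i \<le> m" "m \<le> length ds" "\<forall>l. i \<le> l \<and> l < m \<longrightarrow> ds ! l"
      "m < length ds \<longrightarrow> \<not> ds ! m"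
    using exists_first_backward_edge[OF i_le] by (elim exE conjE) simp
  have "m < j"
  proof (rule ccontr)
    assume "\<not> m < j"
    then have "i \<le> j - 1 \<and> j - 1 < m" using assms(4) by linarith
    then show False using m(3)[rule_format, of "j - 1"] assms(7) by simp
  qed
  then have backward: "\<not> ds ! m" using m(4) assms(5) by simp
  then have "i < m" using m(1) assms(6) by (cases "i = m") auto
  then have "is_collider ds m" using m(3)[rule_format, of "m - 1"] backward unfolding is_collider_def by simp
  moreover have "m < length xs - 1" using \<open>m < j\<close> assms(5) walk unfolding is_walk_def by simp
  ultimately have collider_in: "xs ! m \<in> K" using act \<open>i < m\<close> unfolding active_walk_def by simp
  have "(xs ! i, xs ! m) \<in> {(u, v). E u v}\<^sup>*" using walk_forward_rtrancl[OF walk m(1,2,3)] .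
  from ancestral_rtrancl[OF closed this collider_in] show ?thesis .
qed

lemma nth_take_append_drop:
  assumes "i \<le> j" "j \<le> length xs"
  shows "(take i xs @ drop j xs) ! k = xs ! (if k < i then k else k + (j - i))"
  using assms by (auto simp: nth_append ac_simps)

lemma is_walk_remove_loop:
  assumes walk: "is_walk E xs ds" and "i < j" "j < length xs" "xs ! i = xs ! j"
  shows "is_walk E (take i xs @ drop j xs) (take i ds @ drop j ds)"
  unfolding is_walk_def
proof (intro conjI allI impI)
  let ?g = "\<lambda>k. if k < i then k else k + (j - i)"
  have lds: "length ds = length xs - 1" using walk unfolding is_walk_def by simp
  show "take i xs @ drop j xs \<noteq> []" "length (take i ds @ drop j ds) = length (take i xs @ drop j xs) - 1"
    using assms lds by auto
  fix k assume k: "k < length (take i ds @ drop j ds)"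
  have "(take i xs @ drop j xs) ! k = xs ! ?g k"
    using nth_take_append_drop[of i j xs] assms by simp
  moreover have "(take i ds @ drop j ds) ! k = ds ! ?g k"
    using nth_take_append_drop[of i j ds] assms lds by simp
  moreover have "(take i xs @ drop j xs) ! Suc k = xs ! Suc (?g k)"
    using nth_take_append_drop[of i j xs "Suc k"] assms by (cases "Suc k = i") auto
  moreover have "?g k < length ds" using k assms lds by auto
  ultimately show "if (take i ds @ drop j ds) ! k
      then E ((take i xs @ drop j xs) ! k) ((take i xs @ drop j xs) ! Suc k)
      else E ((take i xs @ drop j xs) ! Suc k) ((take i xs @ drop j xs) ! k)"
    using is_walk_edge[OF walk] by simp
qed

lemma active_walk_remove_loop:
  assumes walk: "is_walk E xs ds" and act: "active_walk K C xs ds"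
    and closed: "ancestral E K"
    and ij: "i < j" "j < length xs" "xs ! i = xs ! j"
  shows "active_walk K C (take i xs @ drop j xs) (take i ds @ drop j ds)"
  unfolding active_walk_def
proof (intro allI impI)
  let ?g = "\<lambda>k. if k < i then k else k + (j - i)"
  let ?xs = "take i xs @ drop j xs" and ?ds = "take i ds @ drop j ds"
  have lds: "length ds = length xs - 1" using walk unfolding is_walk_def by simp
  have nth_xs: "?xs ! k = xs ! ?g k" for k using nth_take_append_drop[of i j xs] ij by simp
  have nth_ds: "?ds ! k = ds ! ?g k" for k using nth_take_append_drop[of i j ds] ij lds by simp
  have old: "(is_collider ds k \<longrightarrow> xs ! k \<in> K) \<and> (\<not> is_collider ds k \<longrightarrow> xs ! k \<notin> C)"
    if "0 < k" "k < length ds" for k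
    using act that lds unfolding active_walk_def by simp
  fix k assume k: "0 < k \<and> k < length ?xs - 1"
  show "(is_collider ?ds k \<longrightarrow> ?xs ! k \<in> K) \<and> (\<not> is_collider ?ds k \<longrightarrow> ?xs ! k \<notin> C)"
  proof (cases "k = i")
    case False
    then have "?g (k - 1) = ?g k - 1" using k by auto
    then have "is_collider ?ds k = is_collider ds (?g k)"
      unfolding is_collider_def nth_ds by simp
    moreover have "0 < ?g k" "?g k < length ds" using k ij lds by auto
    ultimately show ?thesis using old[of "?g k"] nth_xs by simp
  next
    case True
    have bounds: "0 < i" "j < length ds" using k True ij lds by auto
    have collider_iff: "is_collider ?ds i \<longleftrightarrow> ds ! (i - 1) \<and> \<not> ds ! j"
      unfolding is_collider_def nth_ds using bounds ij by simp
    have at_i: "(is_collider ds i \<longrightarrow> xs ! i \<in> K) \<and> (\<not> is_collider ds i \<longrightarrow> xs ! i \<notin> C)"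
      using old[of i] bounds ij(1) by simp
    have at_j: "(is_collider ds j \<longrightarrow> xs ! i \<in> K) \<and> (\<not> is_collider ds j \<longrightarrow> xs ! i \<notin> C)"
      using old[of j] bounds ij by simp
    have "xs ! i \<in> K" if "is_collider ?ds i"
    proof (cases "is_collider ds i \<or> is_collider ds j")
      case False
      then have "ds ! i" "\<not> ds ! (j - 1)"
        using that collider_iff unfolding is_collider_def by auto
      then show ?thesis
        using active_walk_turn_in_ancestral[OF walk act closed, of i j] ij(1) bounds by simp
    qed (use at_i at_j in blast)
    moreover have "xs ! i \<notin> C" if "\<not> is_collider ?ds i"
      using that collider_iff at_i at_j unfolding is_collider_def by blast
    ultimately show ?thesis using True nth_xs[of i] ij by simp
  qed
qed

lemma active_walk_imp_active_path:
  assumes closed: "ancestral E K"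
  shows "is_walk E xs ds \<Longrightarrow> active_walk K C xs ds \<Longrightarrow>
    \<exists>ys es. is_path E ys es \<and> hd ys = hd xs \<and> last ys = last xs \<and> active_walk K C ys es"
proof (induction "length xs" arbitrary: xs ds rule: less_induct)
  case less
  show ?case
  proof (cases "distinct xs")
    case True
    then show ?thesis using less.prems is_path_iff_walk_distinct by blast
  next
    case False
    then obtain i j where ij: "i < j" "j < length xs" "xs ! i = xs ! j"
      by (metis distinct_conv_nth linorder_neqE_nat)
    let ?xs = "take i xs @ drop j xs" and ?ds = "take i ds @ drop j ds"
    have "hd ?xs = ?xs ! 0" using ij by (simp add: hd_conv_nth)
    also have "\<dots> = xs ! 0" using nth_take_append_drop[of i j xs 0] ij by auto
    also have "\<dots> = hd xs" using ij by (cases xs) auto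
    finally have "hd ?xs = hd xs" .
    moreover have "last ?xs = last xs" using ij by simp
    moreover have "length ?xs < length xs" using ij by simp
    ultimately show ?thesis
      using less.hyps[OF _ is_walk_remove_loop[OF less.prems(1) ij]
          active_walk_remove_loop[OF less.prems closed ij]] by metis
  qed
qed

lemma is_walk_take:
  "is_walk E xs ds \<Longrightarrow> k < length xs \<Longrightarrow> is_walk E (take (Suc k) xs) (take k ds)"
  unfolding is_walk_def by auto

lemma is_walk_snoc_forward:
  assumes "is_walk E xs ds" "E (last xs) c"
  shows "is_walk E (xs @ [c]) (ds @ [True])"
  unfolding is_walk_def
proof (intro conjI allI impI)
  have lds: "length ds = length xs - 1" "xs \<noteq> []" using assms(1) unfolding is_walk_def by auto
  then show "xs @ [c] \<noteq> []" "length (ds @ [True]) = length (xs @ [c]) - 1" by auto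
  fix k assume k: "k < length (ds @ [True])"
  show "if (ds @ [True]) ! k then E ((xs @ [c]) ! k) ((xs @ [c]) ! Suc k)
        else E ((xs @ [c]) ! Suc k) ((xs @ [c]) ! k)"
  proof (cases "k < length ds")
    case True
    then show ?thesis using is_walk_edge[OF assms(1) True] lds by (auto simp: nth_append)
  next
    case False
    then have "k = length xs - 1" using k lds by simp
    then show ?thesis using assms(2) lds by (auto simp: nth_append last_conv_nth)
  qed
qed

lemma active_walk_snoc_forward:
  assumes "active_walk K C xs ds" "length ds = length xs - 1" "ds \<noteq> []" "last ds" "last xs \<notin> C"
  shows "active_walk K C (xs @ [c]) (ds @ [True])"
  unfolding active_walk_def
proof (intro allI impI)
  fix k assume k: "0 < k \<and> k < length (xs @ [c]) - 1"
  show "(is_collider (ds @ [True]) k \<longrightarrow> (xs @ [c]) ! k \<in> K) \<and>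
      (\<not> is_collider (ds @ [True]) k \<longrightarrow> (xs @ [c]) ! k \<notin> C)"
  proof (cases "k < length xs - 1")
    case True
    then have "is_collider (ds @ [True]) k = is_collider ds k" "(xs @ [c]) ! k = xs ! k"
      unfolding is_collider_def using assms(2) by (auto simp: nth_append)
    then show ?thesis using assms(1) k True unfolding active_walk_def by simp
  next
    case False
    moreover have "k < length xs" using k by simp
    ultimately have "k = length ds" using assms(2) by linarith
    moreover have "xs \<noteq> []" using assms(2,3) by auto
    ultimately show ?thesis using assms(2-5)
      by (auto simp: is_collider_def nth_append last_conv_nth)
  qed
qed

lemma active_walk_extend_along_rtrancl:
  assumes "(c, b) \<in> {(u, v). H u v}\<^sup>*" "b \<in> B"
  shows "is_walk (\<lambda>i j. H i j \<and> i \<notin> B) xs ds \<Longrightarrow> last xs = c \<Longrightarrow> ds \<noteq> [] \<Longrightarrow> last ds \<Longrightarrow>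
    active_walk (ancestors H C) C xs ds \<Longrightarrow> c \<notin> ancestors H C \<Longrightarrow>
    \<exists>ys es. is_walk (\<lambda>i j. H i j \<and> i \<notin> B) ys es \<and> hd ys = hd xs \<and> last ys \<in> B \<and>
      active_walk (ancestors H C) C ys es"
  using assms(1)
proof (induction arbitrary: xs ds rule: converse_rtrancl_induct)
  case base
  then show ?case using assms(2) by blast
next
  case (step c c')
  show ?case
  proof (cases "c \<in> B")
    case True
    then show ?thesis using step.prems by blast
  next
    case False
    have edge: "H c c'" using step.hyps(1) by simp
    have lds: "length ds = length xs - 1" "xs \<noteq> []" using step.prems(1) unfolding is_walk_def by auto
    have "is_walk (\<lambda>i j. H i j \<and> i \<notin> B) (xs @ [c']) (ds @ [True])"
      using is_walk_snoc_forward[OF step.prems(1)] edge False step.prems(2) by simp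
    moreover have "last xs \<notin> C" using step.prems(2,6) subset_ancestors[of C H] by blast
    then have "active_walk (ancestors H C) C (xs @ [c']) (ds @ [True])"
      by (rule active_walk_snoc_forward[OF step.prems(5) lds(1) step.prems(3,4)])
    moreover have "c' \<notin> ancestors H C"
      using ancestral_ancestors[of H C] step.prems(6) edge unfolding ancestral_def by blast
    ultimately obtain ys es where "is_walk (\<lambda>i j. H i j \<and> i \<notin> B) ys es" "hd ys = hd (xs @ [c'])"
        "last ys \<in> B" "active_walk (ancestors H C) C ys es"
      using step.IH[of "xs @ [c']" "ds @ [True]"] by auto
    then show ?thesis using lds(2) by auto
  qed
qed

text \<open>Colliders that are ancestors of B but not of C are removed by cutting the walk at the
first such collider and following a directed path from it up to its first node in B, so that
no edge out of B is used.\<close>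

lemma active_walk_reroute_colliders:
  assumes walk: "is_walk (\<lambda>i j. H i j \<and> i \<notin> B) xs ds" and "last xs \<in> B"
    and act: "active_walk (ancestors H (B \<union> C)) C xs ds"
  shows "\<exists>ys es. is_walk (\<lambda>i j. H i j \<and> i \<notin> B) ys es \<and> hd ys = hd xs \<and> last ys \<in> B \<and>
    active_walk (ancestors H C) C ys es"
proof (cases "active_walk (ancestors H C) C xs ds")
  case True
  then show ?thesis using walk assms(2) by blast
next
  case False
  let ?P = "\<lambda>k. 0 < k \<and> k < length xs - 1 \<and> is_collider ds k \<and> xs ! k \<notin> ancestors H C"
  have "\<exists>k. ?P k" using False act unfolding active_walk_def by blast
  then obtain k where k: "?P k" and before: "\<And>m. m < k \<Longrightarrow> \<not> ?P m"
    using exists_least_iff[of ?P] by blast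
  have lds: "length ds = length xs - 1" using walk unfolding is_walk_def by simp
  let ?xs = "take (Suc k) xs" and ?ds = "take k ds"
  have "k < length xs" using k by linarith
  then have walk': "is_walk (\<lambda>i j. H i j \<and> i \<notin> B) ?xs ?ds" by (rule is_walk_take[OF walk])
  have "last ?xs = xs ! k" using \<open>k < length xs\<close> by (simp add: take_Suc_conv_app_nth)
  have "?ds \<noteq> []" using k lds by auto
  have "last ?ds = ds ! (k - 1)" using k lds by (cases k) (auto simp: take_Suc_conv_app_nth)
  then have "last ?ds" using k by (simp add: is_collider_def)
  have "active_walk (ancestors H C) C ?xs ?ds"
    unfolding active_walk_def
  proof (intro allI impI)
    fix m assume m: "0 < m \<and> m < length ?xs - 1"
    then have "m < k" using \<open>k < length xs\<close> by simp
    then have "is_collider ?ds m = is_collider ds m" "?xs ! m = xs ! m"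
      unfolding is_collider_def by auto
    then show "(is_collider ?ds m \<longrightarrow> ?xs ! m \<in> ancestors H C) \<and>
        (\<not> is_collider ?ds m \<longrightarrow> ?xs ! m \<notin> C)"
      using before[OF \<open>m < k\<close>] act m k unfolding active_walk_def by auto
  qed
  have "xs ! k \<in> ancestors H B" using act k ancestors_Un[of H B C] unfolding active_walk_def by auto
  then obtain b where "b \<in> B" "(xs ! k, b) \<in> {(u, v). H u v}\<^sup>*" unfolding ancestors_def by blast
  from active_walk_extend_along_rtrancl[OF this(2,1) walk' \<open>last ?xs = xs ! k\<close> \<open>?ds \<noteq> []\<close> \<open>last ?ds\<close>
      \<open>active_walk (ancestors H C) C ?xs ?ds\<close>] k
  obtain ys es where "is_walk (\<lambda>i j. H i j \<and> i \<notin> B) ys es" "hd ys = hd ?xs" "last ys \<in> B"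
    "active_walk (ancestors H C) C ys es" by blast
  moreover have "hd ?xs = hd xs" using k by (cases xs) auto
  ultimately show ?thesis by auto
qed

lemma delta_sep_dg_no_active_walk:
  assumes "delta_sep_dg H A B C" "is_walk (\<lambda>i j. H i j \<and> i \<notin> B) xs ds" "hd xs \<in> A" "last xs \<in> B"
  shows "\<not> active_walk (ancestors H (B \<union> C)) C xs ds"
proof
  assume "active_walk (ancestors H (B \<union> C)) C xs ds"
  then obtain ys es where walk: "is_walk (\<lambda>i j. H i j \<and> i \<notin> B) ys es" and "hd ys = hd xs"
      and "last ys \<in> B" and act: "active_walk (ancestors H C) C ys es"
    using active_walk_reroute_colliders[OF assms(2,4)] by blast
  have "ancestral (\<lambda>i j. H i j \<and> i \<notin> B) (ancestors H C)"
    by (rule ancestral_mono[OF _ ancestral_ancestors]) simp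
  from active_walk_imp_active_path[OF this walk act] obtain zs fs
    where "is_path (\<lambda>i j. H i j \<and> i \<notin> B) zs fs" "hd zs \<in> A" "last zs \<in> B"
      "active_walk (ancestors H C) C zs fs"
    using \<open>hd ys = hd xs\<close> \<open>last ys \<in> B\<close> assms(3) by auto
  then show False
    using assms(1) not_blocked_iff_active_walk unfolding delta_sep_dg_def sep_paths_def by blast
qed

text \<open>The first node at time t or later would start a run of forward edges ending either in a
collider or in the last node.\<close>

lemma walk_times_before:
  fixes \<tau> :: "'b \<Rightarrow> nat"
  assumes walk: "is_walk G xs ds" and mono: "\<And>x y. G x y \<Longrightarrow> \<tau> x \<le> \<tau> y"
    and first: "\<tau> (hd xs) < t"
    and colliders: "\<And>k. 0 < k \<Longrightarrow> k < length ds \<Longrightarrow> is_collider ds k \<Longrightarrow> \<tau> (xs ! k) < t"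
    and into_last: "\<And>x. G x (last xs) \<Longrightarrow> \<tau> x < t"
    and k: "k < length ds"
  shows "\<tau> (xs ! k) < t"
proof (rule ccontr)
  assume "\<not> \<tau> (xs ! k) < t"
  then have "\<exists>k. k < length ds \<and> t \<le> \<tau> (xs ! k)" using k by auto
  then obtain k0 where k0: "k0 < length ds" "t \<le> \<tau> (xs ! k0)"
      and earlier': "\<And>l. l < k0 \<Longrightarrow> \<not> (l < length ds \<and> t \<le> \<tau> (xs ! l))"
    unfolding exists_least_iff[of "\<lambda>k. k < length ds \<and> t \<le> \<tau> (xs ! k)"] by blast
  have earlier: "\<tau> (xs ! l) < t" if "l < k0" for l using earlier'[OF that] that k0(1) by simp
  have lxs: "length xs = Suc (length ds)" using walk unfolding is_walk_def by auto
  have "0 < k0" using k0 first walk unfolding is_walk_def by (cases k0) (auto simp: hd_conv_nth)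
  have entering: "ds ! (k0 - 1)"
  proof (rule ccontr)
    assume "\<not> ds ! (k0 - 1)"
    then have "G (xs ! k0) (xs ! (k0 - 1))" using is_walk_edge[OF walk, of "k0 - 1"] \<open>0 < k0\<close> k0 by simp
    then have "\<tau> (xs ! k0) \<le> \<tau> (xs ! (k0 - 1))" by (rule mono)
    then show False using earlier[of "k0 - 1"] \<open>0 < k0\<close> k0(2) by simp
  qed
  have "k0 \<le> length ds" using k0(1) by simp
  then obtain m where m: "k0 \<le> m" "m \<le> length ds" "\<forall>l. k0 \<le> l \<and> l < m \<longrightarrow> ds ! l"
      "m < length ds \<longrightarrow> \<not> ds ! m"
    by (elim exists_first_backward_edge[THEN exE]) blast
  have forward_into_m: "ds ! (m - 1)" using entering m(1,3) by (cases "m = k0") auto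
  have late: "t \<le> \<tau> (xs ! l)" if "k0 \<le> l" "l \<le> m" for l
  proof -
    have path: "(xs ! k0, xs ! l) \<in> {(u, v). G u v}\<^sup>*"
      using walk_forward_rtrancl[OF walk that(1)] that m by auto
    have "\<tau> (xs ! k0) \<le> \<tau> (xs ! l)" using rtrancl_monotone[of G \<tau>, OF mono path] .
    then show ?thesis using k0(2) by simp
  qed
  show False
  proof (cases "m < length ds")
    case True
    then have "is_collider ds m" using m(4) forward_into_m unfolding is_collider_def by simp
    then have "\<tau> (xs ! m) < t" using colliders[of m] True m(1) \<open>0 < k0\<close> by simp
    moreover have "t \<le> \<tau> (xs ! m)" using late[of m] m(1) by simp
    ultimately show False by simp
  next
    case False
    then have "m = length ds" "Suc (m - 1) = m" using m(2) k0(1) by auto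
    moreover have "last xs = xs ! length ds" using lxs by (cases xs rule: rev_cases) (auto simp: nth_append)
    ultimately have "G (xs ! (m - 1)) (last xs)"
      using is_walk_edge[OF walk, of "m - 1"] forward_into_m k0(1) by simp
    then have "\<tau> (xs ! (m - 1)) < t" by (rule into_last)
    moreover have "t \<le> \<tau> (xs ! (m - 1))" using late[of "m - 1"] \<open>m = length ds\<close> k0(1) by simp
    ultimately show False by simp
  qed
qed

lemma proper_pair_edge:
  assumes "proper_pair V W Ed Et t' G" "G (i, s) (j, u)"
  shows "s \<le> u" and "minus_graph Ed Et i j" and "s = u \<Longrightarrow> Et i j"
proof -
  have "is_rolled V W t' G Ed Et \<or> G = unrolled V W t' Ed Et"
    using assms(1) unfolding proper_pair_def by blast
  then have "s \<le> u \<and> minus_graph Ed Et i j \<and> (s = u \<longrightarrow> Et i j)"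
  proof
    assume "is_rolled V W t' G Ed Et"
    then have time: "\<And>i j s t. G (i, s) (j, t) \<Longrightarrow> s \<le> t"
      and tailed: "\<And>i j t. G (i, t) (j, t) \<Longrightarrow> Et i j"
      and rolled: "\<And>i j s t. s \<le> t \<Longrightarrow> G (i, s) (j, t) \<Longrightarrow> Ed i j \<or> Et i j"
      unfolding is_rolled_def by blast+
    show ?thesis using time[OF assms(2)] tailed rolled[OF _ assms(2)] assms(2)
      unfolding minus_graph_def by auto
  next
    assume "G = unrolled V W t' Ed Et"
    then show ?thesis using assms(2) unfolding unrolled_def minus_graph_def by auto
  qed
  then show "s \<le> u" "minus_graph Ed Et i j" "s = u \<Longrightarrow> Et i j" by auto
qed

locale unrolled_connecting_path =
  fixes V W A B C :: "'a set" and Ed Et :: "'a \<Rightarrow> 'a \<Rightarrow> bool"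
    and G :: "('a \<times> nat) \<Rightarrow> ('a \<times> nat) \<Rightarrow> bool" and t' t :: nat
    and xs :: "('a \<times> nat) list" and ds :: "bool list"
  assumes proper: "proper_pair V W Ed Et t' G" and no_tail: "\<forall>i. \<forall>j\<in>B. \<not> Et i j"
    and disjoint: "A \<inter> B = {}" and positive: "0 < t"
    and path: "is_path G xs ds" and first: "hd xs \<in> nu_bar V W t' A (t - 1)"
    and last: "last xs \<in> nu V W t' B t"
    and active: "active_walk (ancestors G (nu_bar V W t' (B \<union> C) (t - 1)))
      (nu_bar V W t' (B \<union> C) (t - 1)) xs ds"
begin

abbreviation "S \<equiv> nu_bar V W t' (B \<union> C) (t - 1)"

lemma walk: "is_walk G xs ds"
  using path is_path_iff_walk_distinct by blast

lemma length_nodes: "length xs = Suc (length ds)"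
  using walk unfolding is_walk_def by auto

lemma edge_time: "G x y \<Longrightarrow> snd x \<le> snd y"
  using proper_pair_edge(1)[OF proper, of "fst x" "snd x" "fst y" "snd y"] by simp

lemma edge_project: "G x y \<Longrightarrow> minus_graph Ed Et (fst x) (fst y)"
  using proper_pair_edge(2)[OF proper, of "fst x" "snd x" "fst y" "snd y"] by simp

lemma first_node: "snd (xs ! 0) < t" "fst (xs ! 0) \<in> A"
proof -
  have "hd xs = xs ! 0" using length_nodes by (cases xs) auto
  then show "snd (xs ! 0) < t" "fst (xs ! 0) \<in> A"
    using first positive unfolding nu_bar_def by auto
qed

lemma last_node: "snd (xs ! length ds) = t" "fst (xs ! length ds) \<in> B"
proof -
  have "last xs = xs ! length ds" using length_nodes by (cases xs rule: rev_cases) (auto simp: nth_append)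
  then show "snd (xs ! length ds) = t" "fst (xs ! length ds) \<in> B" using last unfolding nu_def by auto
qed

text \<open>A node of B at time t has no contemporaneous parent, since those edges are tailed.\<close>

lemma before_last: "k < length ds \<Longrightarrow> snd (xs ! k) < t"
proof (rule walk_times_before[OF walk, of snd, OF edge_time])
  show "snd (hd xs) < t" using first positive unfolding nu_bar_def by auto
next
  fix k assume "0 < k" "k < length ds" "is_collider ds k"
  then have anc: "xs ! k \<in> ancestors G S"
    using active length_nodes unfolding active_walk_def by auto
  have bound: "\<forall>y\<in>S. snd y \<le> t - 1" unfolding nu_bar_def by auto
  have "snd (xs ! k) \<le> t - 1" using ancestors_bounded[of G snd, OF edge_time bound anc] .
  then show "snd (xs ! k) < t" using positive by simp
next
  fix x assume edge: "G x (last xs)"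
  obtain j where j: "last xs = (j, t)" "j \<in> B" using last unfolding nu_def by auto
  then have "snd x \<le> t" "snd x = t \<Longrightarrow> Et (fst x) j"
    using proper_pair_edge[OF proper, of "fst x" "snd x" j t] edge by auto
  then show "snd x < t" using no_tail j(2) by fastforce
qed

lemma nonempty_edges: "0 < length ds"
  using first_node(1) last_node(1) by (cases "length ds") auto

lemma last_edge_forward: "ds ! (length ds - 1)"
proof (rule ccontr)
  let ?n = "length ds"
  assume "\<not> ds ! (?n - 1)"
  then have "G (xs ! ?n) (xs ! (?n - 1))" using is_walk_edge[OF walk, of "?n - 1"] nonempty_edges by simp
  then have "snd (xs ! ?n) \<le> snd (xs ! (?n - 1))" by (rule edge_time)
  then show False using before_last[of "?n - 1"] last_node(1) nonempty_edges by simp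
qed

lemma node_in_unr_nodes: "k < length ds \<Longrightarrow> xs ! k \<in> unr_nodes V W t'"
proof -
  assume k: "k < length ds"
  have "dag_on (unr_nodes V W t') G" using proper unfolding proper_pair_def by simp
  then have endpoint: "x \<in> unr_nodes V W t'" if "G x y \<or> G y x" for x y
    using that unfolding dag_on_def by blast
  show ?thesis using is_walk_edge[OF walk k] endpoint[of "xs ! k" "xs ! Suc k"] by (cases "ds ! k") auto
qed

lemma non_collider_project:
  assumes "0 < k" "k < length ds" "\<not> is_collider ds k"
  shows "fst (xs ! k) \<notin> B \<union> C"
proof
  assume "fst (xs ! k) \<in> B \<union> C"
  then have "xs ! k \<in> S"
    using node_in_unr_nodes[OF assms(2)] before_last[OF assms(2)] unfolding nu_bar_def by auto
  then show False using active assms length_nodes unfolding active_walk_def by auto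
qed

lemma collider_project:
  assumes "0 < k" "k < length ds" "is_collider ds k"
  shows "fst (xs ! k) \<in> ancestors (minus_graph Ed Et) (B \<union> C)"
proof -
  have anc: "xs ! k \<in> ancestors G S" using active assms length_nodes unfolding active_walk_def by auto
  have "fst ` S \<subseteq> B \<union> C" unfolding nu_bar_def by auto
  from ancestors_map[of G "minus_graph Ed Et" fst, OF edge_project this anc] show ?thesis .
qed

lemma projected_walk: "is_walk (\<lambda>i j. minus_graph Ed Et i j \<and> i \<notin> B) (map fst xs) ds"
  unfolding is_walk_def
proof (intro conjI allI impI)
  show "map fst xs \<noteq> []" "length ds = length (map fst xs) - 1" using length_nodes by auto
  fix k assume k: "k < length ds"
  show "if ds ! k
    then minus_graph Ed Et (map fst xs ! k) (map fst xs ! Suc k) \<and> map fst xs ! k \<notin> B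
    else minus_graph Ed Et (map fst xs ! Suc k) (map fst xs ! k) \<and> map fst xs ! Suc k \<notin> B"
  proof (cases "ds ! k")
    case True
    have "fst (xs ! k) \<notin> B"
      using disjoint first_node(2) non_collider_project[OF _ k] True unfolding is_collider_def
      by (cases "k = 0") auto
    then show ?thesis using True edge_project is_walk_edge[OF walk k] k length_nodes by simp
  next
    case False
    have "k \<noteq> length ds - 1" using False last_edge_forward by auto
    then have "Suc k < length ds" using k by linarith
    then have "fst (xs ! Suc k) \<notin> B" using non_collider_project False unfolding is_collider_def by auto
    then show ?thesis using False edge_project is_walk_edge[OF walk k] k length_nodes by simp
  qed
qed

lemma projected_walk_active: "active_walk (ancestors (minus_graph Ed Et) (B \<union> C)) C (map fst xs) ds"
  unfolding active_walk_def
proof (intro allI impI)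
  fix k assume "0 < k \<and> k < length (map fst xs) - 1"
  then have k: "0 < k" "k < length ds" using length_nodes by auto
  then show "(is_collider ds k \<longrightarrow> map fst xs ! k \<in> ancestors (minus_graph Ed Et) (B \<union> C)) \<and>
      (\<not> is_collider ds k \<longrightarrow> map fst xs ! k \<notin> C)"
    using collider_project[OF k] non_collider_project[OF k] length_nodes by simp
qed

end

theorem corollary2:
  fixes V W A B C :: "'a set" and Ed Et :: "'a \<Rightarrow> 'a \<Rightarrow> bool"
    and G :: "('a \<times> nat) \<Rightarrow> ('a \<times> nat) \<Rightarrow> bool" and t' :: nat
  assumes "proper_pair V W Ed Et t' G"
    and "A \<subseteq> V \<union> W" and "C \<subseteq> V \<union> W" and "B \<subseteq> V"
    and "A \<inter> B = {}" and "A \<inter> C = {}" and "B \<inter> C = {}"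
    and "\<forall>i. \<forall>j\<in>B. \<not> Et i j"
    and "delta_sep Ed Et A B C"
  shows "\<forall>t. 0 < t \<and> t \<le> t' \<longrightarrow>
           d_sep G (nu_bar V W t' A (t - 1)) (nu V W t' B t) (nu_bar V W t' (B \<union> C) (t - 1))"
proof (intro allI impI)
  fix t assume "0 < t \<and> t \<le> t'"
  then have "0 < t" by simp
  let ?S = "nu_bar V W t' (B \<union> C) (t - 1)"
  show "d_sep G (nu_bar V W t' A (t - 1)) (nu V W t' B t) ?S"
    unfolding d_sep_def sep_paths_def
  proof (intro allI impI)
    fix xs ds
    assume path: "is_path G xs ds \<and> hd xs \<in> nu_bar V W t' A (t - 1) \<and> last xs \<in> nu V W t' B t"
    show "blocked G ?S xs ds"
    proof (rule ccontr)
      assume "\<not> blocked G ?S xs ds"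
      then interpret unrolled_connecting_path V W A B C Ed Et G t' t xs ds
        using assms(1,5,8) \<open>0 < t\<close> path by unfold_locales (simp_all add: not_blocked_iff_active_walk)
      have "hd (map fst xs) \<in> A" "last (map fst xs) \<in> B"
        using first last walk unfolding nu_bar_def nu_def is_walk_def by (auto simp: hd_map last_map)
      with delta_sep_dg_no_active_walk[OF assms(9)[unfolded delta_sep_def] projected_walk]
      show False using projected_walk_active by blast
    qed
  qed
qed

end
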